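(* Let $xy\in\{0,1\}^n$ be a characteristic string. Then there is an $x$-balanced fork $F\vdash xy$ if and only if $\mu_x(y)\ge0$.
   Context: Characteristic strings and forks. A characteristic string is $w=w_1\dots w_n\in\{0,1\}^n$; index $i$ is honest if $w_i=0$ and adversarial if $w_i=1$. A fork for $w$ is a rooted tree with edges directed away from the root $r$ and labeling $\ell:V\to\{0,\dots,n\}$ with (F1) $\ell(r)=0$; (F2) labels strictly increasing along directed paths; (F3) each honest index labels exactly one vertex; (F4) for honest $i<j$ the vertex labeled $i$ has strictly smaller depth than the vertex labeled $j$. Write $F\vdash w$. A vertex is honest if it is the root or labeled by an honest index. A tine is a directed path from the root; its length is its number of edges, $\ell(t)$ the label of its last vertex; $\mathrm{height}(F)$ is the maximum tine length. A fork is closed if every leaf is honest; a closed fork has a unique longest tine $\hat t$. For closed $F\vdash w$ and tine $t$: $\mathrm{gap}(t)=\mathrm{length}(\hat t)-\mathrm{length}(t)$, $\mathrm{reserve}(t)=|\{i:w_i=1,\ i>\ell(t)\}|$, $\mathrm{reach}(t)=\mathrm{reserve}(t)-\mathrm{gap}(t)$. For $w=xy$, tines $t_1,t_2$ are disjoint over $y$ (written $t_1\not\sim_x t_2$) if they share no edge terminating at a vertex with label $>|x|$ (a tine may be paired with itself). $\mu_x(F)=\max\min\{\mathrm{reach}(t_1),\mathrm{reach}(t_2)\}$ over pairs disjoint over $y$, and $\mu_x(y)=\max\{\mu_x(F):F\vdash xy\text{ closed}\}$. A fork $F\vdash xy$ is $x$-balanced if it contains tines $t_1\not\sim_x t_2$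 with $\mathrm{length}(t_1)=\mathrm{length}(t_2)=\mathrm{height}(F)$. *)

theory Defs
  imports Main "HOL-Library.Sublist"
begin

text \<open>Characteristic strings: a bool list w, where index i (1-based) is adversarial
  iff w ! (i - 1) = True (i.e. w_i = 1) and honest iff w ! (i - 1) = False (w_i = 0).\<close>

type_synonym charstring = "bool list"

definition honest_idx :: "charstring \<Rightarrow> nat \<Rightarrow> bool" where
  "honest_idx w i \<longleftrightarrow> 1 \<le> i \<and> i \<le> length w \<and> \<not> w ! (i - 1)"

definition adv_idx :: "charstring \<Rightarrow> nat \<Rightarrow> bool" where
  "adv_idx w i \<longleftrightarrow> 1 \<le> i \<and> i \<le> length w \<and> w ! (i - 1)"

text \<open>Forks are encoded as rooted trees given by the set of their vertices, where a vertex
  is identified with the directed path from the root to it: a list of edges, each edge given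
  by (label of the target vertex, a tag distinguishing siblings).
  The parent of a nonempty vertex v is butlast v, its depth is length v. Every rooted labelled
  tree is isomorphic to such an encoding. Tines (paths from the root) correspond one-to-one
  to vertices (their endpoints).\<close>

type_synonym vertex = "(nat \<times> nat) list"
type_synonym fork = "vertex set"

definition lab :: "vertex \<Rightarrow> nat" where
  "lab v = (if v = [] then 0 else fst (last v))"

definition is_fork :: "charstring \<Rightarrow> fork \<Rightarrow> bool" where
  "is_fork w F \<longleftrightarrow>
     finite F \<and> [] \<in> F \<and> (\<forall>v\<in>F. \<forall>u. prefix u v \<longrightarrow> u \<in> F) \<comment> \<open>rooted tree\<close>
   \<and> (\<forall>v\<in>F. \<forall>e\<in>set v. fst e \<le> length w) \<comment> \<open>labels in {0..n}\<close>
   \<and> (\<forall>v\<in>F. sorted_wrt (<) (0 # map fst v)) \<comment> \<open>(F1),(F2)\<close>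
   \<and> (\<forall>i. honest_idx w i \<longrightarrow> (\<exists>!v. v \<in> F \<and> v \<noteq> [] \<and> lab v = i)) \<comment> \<open>(F3)\<close>
   \<and> (\<forall>u\<in>F. \<forall>v\<in>F. u \<noteq> [] \<longrightarrow> v \<noteq> [] \<longrightarrow> honest_idx w (lab u) \<longrightarrow> honest_idx w (lab v)
        \<longrightarrow> lab u < lab v \<longrightarrow> length u < length v) \<comment> \<open>(F4)\<close>"

definition height :: "fork \<Rightarrow> nat" where
  "height F = Max (length ` F)"

definition is_leaf :: "fork \<Rightarrow> vertex \<Rightarrow> bool" where
  "is_leaf F v \<longleftrightarrow> v \<in> F \<and> \<not> (\<exists>u\<in>F. strict_prefix v u)"

definition honest_vertex :: "charstring \<Rightarrow> vertex \<Rightarrow> bool" where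
  "honest_vertex w v \<longleftrightarrow> v = [] \<or> honest_idx w (lab v)"

definition closed_fork :: "charstring \<Rightarrow> fork \<Rightarrow> bool" where
  "closed_fork w F \<longleftrightarrow> is_fork w F \<and> (\<forall>v. is_leaf F v \<longrightarrow> honest_vertex w v)"

text \<open>In a closed fork the unique longest tine has length height F.\<close>
definition gap :: "fork \<Rightarrow> vertex \<Rightarrow> nat" where
  "gap F t = height F - length t"

definition reserve :: "charstring \<Rightarrow> vertex \<Rightarrow> nat" where
  "reserve w t = card {i. adv_idx w i \<and> i > lab t}"

definition reach :: "charstring \<Rightarrow> fork \<Rightarrow> vertex \<Rightarrow> int" where
  "reach w F t = int (reserve w t) - int (gap F t)"

text \<open>Tines t1, t2 are disjoint over y (w = x y): they share no edge terminating at a vertex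
  with label > |x|. The edges of tine t terminate exactly at the nonempty prefixes of t.\<close>
definition disjoint_over :: "nat \<Rightarrow> vertex \<Rightarrow> vertex \<Rightarrow> bool" where
  "disjoint_over m t1 t2 \<longleftrightarrow>
     \<not> (\<exists>p. p \<noteq> [] \<and> prefix p t1 \<and> prefix p t2 \<and> lab p > m)"

definition mu_fork :: "charstring \<Rightarrow> charstring \<Rightarrow> fork \<Rightarrow> int" where
  "mu_fork x y F = Max {min (reach (x @ y) F t1) (reach (x @ y) F t2) | t1 t2.
      t1 \<in> F \<and> t2 \<in> F \<and> disjoint_over (length x) t1 t2}"

definition mu :: "charstring \<Rightarrow> charstring \<Rightarrow> int" where
  "mu x y = Max {mu_fork x y F | F. closed_fork (x @ y) F}"

definition x_balanced :: "charstring \<Rightarrow> charstring \<Rightarrow> fork \<Rightarrow> bool" where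
  "x_balanced x y F \<longleftrightarrow> is_fork (x @ y) F \<and>
     (\<exists>t1\<in>F. \<exists>t2\<in>F. disjoint_over (length x) t1 t2 \<and>
        length t1 = height F \<and> length t2 = height F)"

end

theory Submission
  imports Defs
begin

text \<open>
  Cut each of the two longest, y-disjoint tines of a balanced fork back to its last honest vertex
  s: the vertices removed carry distinct adversarial labels beyond the label of s, so their number
  is at most the reserve of s. Discarding all vertices that lie below no honest vertex yields a
  closed fork of no greater height, in which the two cut tines are still disjoint over y and have
  nonnegative reach. Conversely, a tine t of nonnegative reach can be prolonged by gap(t) vertices
  labelled with the adversarial indices following its last label; doing this for both tines of an
  optimal pair, with fresh sibling tags so the extensions share no edge, gives a fork in which both
  tines have maximal length.
\<close>

lemma lab_snoc [simp]: "lab (v @ [e]) = fst e"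
  by (simp add: lab_def)

lemma lab_in_labels: "lab v \<in> set (0 # map fst v)"
  by (cases v rule: rev_cases) (auto simp: lab_def)

lemma prefix_append_last:
  assumes "prefix p (t @ s)"
  shows "prefix p t \<or> last p \<in> set s"
proof (cases "prefix p t")
  case False
  then obtain u where "p = t @ u" "prefix u s" "u \<noteq> []"
    using assms by (auto simp: prefix_append)
  thus ?thesis using set_mono_prefix[of u s] by auto
qed simp

lemma prefixes_eq_if_length_eq:
  "prefix p v \<Longrightarrow> prefix q v \<Longrightarrow> length p = length q \<Longrightarrow> p = q"
  by (metis prefix_length_prefix prefix_order.antisym order_refl)

lemma sorted_labels_prefix:
  assumes "sorted_wrt (<) (0 # map fst v)" "prefix u v"
  shows "sorted_wrt (<) (0 # map fst u)"
  using assms by (auto simp: prefix_def sorted_wrt_append)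

lemma sorted_labels_le_lab:
  assumes "sorted_wrt (<) (0 # map fst v)" "a \<in> set (0 # map fst v)"
  shows "a \<le> lab v"
proof (cases v rule: rev_cases)
  case (snoc u e)
  have "sorted_wrt (<) ((0 # map fst u) @ [fst e])"
    using assms(1) snoc by simp
  with assms(2) snoc show ?thesis
    by (simp only: sorted_wrt_append) (auto intro: less_imp_le)
qed (use assms in \<open>simp add: lab_def\<close>)

lemma sorted_labels_append:
  assumes "sorted_wrt (<) (0 # map fst t)" "sorted_wrt (<) (map fst s)"
    and "\<And>e. e \<in> set s \<Longrightarrow> lab t < fst e"
  shows "sorted_wrt (<) (0 # map fst (t @ s))"
proof -
  have "a < b" if "a \<in> set (0 # map fst t)" "b \<in> set (map fst s)" for a b
    using sorted_labels_le_lab[OF assms(1) that(1)] assms(3) that(2) by fastforce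
  hence "sorted_wrt (<) ((0 # map fst t) @ map fst s)"
    using assms(1,2) by (simp only: sorted_wrt_append) blast
  thus ?thesis by simp
qed

lemma lab_less_lab_of_prefixes:
  assumes "sorted_wrt (<) (0 # map fst v)" "prefix p v" "prefix q v"
    and "length p < length q"
  shows "lab p < lab q"
proof -
  obtain z where q: "q = p @ z" "z \<noteq> []"
    using assms(2-4) prefix_length_prefix[of p v q] by (auto simp: prefix_def)
  have "sorted_wrt (<) ((0 # map fst p) @ map fst z)"
    using sorted_labels_prefix[OF assms(1,3)] q by simp
  moreover have "lab q \<in> set (map fst z)"
    using q by (simp add: lab_def)
  ultimately show ?thesis
    using lab_in_labels[of p] by (simp only: sorted_wrt_append)
qed

lemma
  assumes "is_fork w F"
  shows is_fork_finite: "finite F"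
    and is_fork_root: "[] \<in> F"
    and is_fork_prefix_closed: "v \<in> F \<Longrightarrow> prefix u v \<Longrightarrow> u \<in> F"
    and is_fork_label_le: "v \<in> F \<Longrightarrow> e \<in> set v \<Longrightarrow> fst e \<le> length w"
    and is_fork_sorted: "v \<in> F \<Longrightarrow> sorted_wrt (<) (0 # map fst v)"
  using assms unfolding is_fork_def by blast+

lemma is_fork_same_honest:
  assumes "is_fork w F"
    and "finite G" "[] \<in> G"
    and "\<And>v u. v \<in> G \<Longrightarrow> prefix u v \<Longrightarrow> u \<in> G"
    and "\<And>v e. v \<in> G \<Longrightarrow> e \<in> set v \<Longrightarrow> fst e \<le> length w"
    and "\<And>v. v \<in> G \<Longrightarrow> sorted_wrt (<) (0 # map fst v)"
    and same_honest: "\<And>v. v \<noteq> [] \<Longrightarrow> honest_idx w (lab v) \<Longrightarrow> v \<in> G \<longleftrightarrow> v \<in> F"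
  shows "is_fork w G"
proof -
  have "(\<exists>!v. v \<in> G \<and> v \<noteq> [] \<and> lab v = i) \<longleftrightarrow> (\<exists>!v. v \<in> F \<and> v \<noteq> [] \<and> lab v = i)"
    if "honest_idx w i" for i
    using same_honest that by metis
  moreover have "length u < length v"
    if "u \<in> G" "v \<in> G" "u \<noteq> []" "v \<noteq> []" "honest_idx w (lab u)" "honest_idx w (lab v)"
      "lab u < lab v" for u v
    using that assms(1) same_honest unfolding is_fork_def by metis
  ultimately show ?thesis
    using assms(1-6) unfolding is_fork_def by simp
qed

lemma is_fork_chain:
  assumes sorted: "sorted_wrt (<) (0 # map fst c)"
    and honest: "fst ` set c = {i. honest_idx w i}"
  shows "is_fork w (set (prefixes c))"
  unfolding is_fork_def
proof (intro conjI ballI allI impI)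
  fix v e assume "v \<in> set (prefixes c)" "e \<in> set v"
  hence "fst e \<in> fst ` set c" using set_mono_prefix by fastforce
  thus "fst e \<le> length w" using honest by (auto simp: honest_idx_def)
next
  fix v assume "v \<in> set (prefixes c)"
  thus "sorted_wrt (<) (0 # map fst v)" using sorted sorted_labels_prefix by simp
next
  fix i assume "honest_idx w i"
  then obtain j where j: "j < length c" "fst (c ! j) = i"
    using honest by (metis (mono_tags) image_iff in_set_conv_nth mem_Collect_eq)
  define u where "u = take (Suc j) c"
  have u: "prefix u c" "u \<noteq> []" "lab u = i"
    using j take_is_prefix[of "Suc j" c] unfolding u_def by (auto simp: take_Suc_conv_app_nth)
  show "\<exists>!v. v \<in> set (prefixes c) \<and> v \<noteq> [] \<and> lab v = i"
  proof (rule ex1I)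
    show "u \<in> set (prefixes c) \<and> u \<noteq> [] \<and> lab u = i" using u by simp
  next
    fix v assume v: "v \<in> set (prefixes c) \<and> v \<noteq> [] \<and> lab v = i"
    hence "\<not> length v < length u" "\<not> length u < length v"
      using lab_less_lab_of_prefixes[OF sorted] u by (metis in_set_prefixes less_irrefl)+
    thus "v = u" using v u prefixes_eq_if_length_eq[of v c u] by simp
  qed
next
  fix u v assume uv: "u \<in> set (prefixes c)" "v \<in> set (prefixes c)" "lab u < lab v"
  show "length u < length v"
  proof (rule ccontr)
    assume "\<not> length u < length v"
    then consider "length v < length u" | "length u = length v" by linarith
    thus False
      using uv lab_less_lab_of_prefixes[OF sorted, of v u] prefixes_eq_if_length_eq[of u c v]
      by cases auto
  qed
qed (auto intro: prefix_order.trans)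

lemma fork_exists: "\<exists>F. is_fork w F"
proof -
  define hs where "hs = filter (honest_idx w) [1..<Suc (length w)]"
  have set_hs: "set hs = {i. honest_idx w i}"
    unfolding hs_def honest_idx_def by auto
  have "sorted_wrt (<) hs"
    unfolding hs_def by (intro sorted_wrt_filter sorted_wrt_upt)
  hence "sorted_wrt (<) (0 # hs)"
    using set_hs by (auto simp: honest_idx_def)
  with set_hs have "is_fork w (set (prefixes (map (\<lambda>i. (i, 0::nat)) hs)))"
    by (intro is_fork_chain) (simp_all add: comp_def image_image)
  thus ?thesis by blast
qed

definition trim :: "charstring \<Rightarrow> fork \<Rightarrow> fork" where
  "trim w F = {v \<in> F. \<exists>u \<in> F. honest_vertex w u \<and> prefix v u}"

lemma trim_subset: "trim w F \<subseteq> F"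
  by (auto simp: trim_def)

lemma honest_in_trim: "v \<in> F \<Longrightarrow> honest_vertex w v \<Longrightarrow> v \<in> trim w F"
  by (auto simp: trim_def)

lemma closed_fork_trim:
  assumes F: "is_fork w F"
  shows "closed_fork w (trim w F)"
  unfolding closed_fork_def
proof
  show "is_fork w (trim w F)"
  proof (rule is_fork_same_honest[OF F])
    show "finite (trim w F)"
      using is_fork_finite[OF F] trim_subset finite_subset by metis
    show "[] \<in> trim w F"
      using is_fork_root[OF F] by (simp add: honest_in_trim honest_vertex_def)
    show "u \<in> trim w F" if "v \<in> trim w F" "prefix u v" for u v
      using that is_fork_prefix_closed[OF F] prefix_order.trans by (fastforce simp: trim_def)
    show "v \<in> trim w F \<longleftrightarrow> v \<in> F" if "honest_idx w (lab v)" for v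
      using that trim_subset honest_in_trim by (auto simp: honest_vertex_def)
    show "fst e \<le> length w" if "v \<in> trim w F" "e \<in> set v" for v e
      using that trim_subset is_fork_label_le[OF F] by blast
    show "sorted_wrt (<) (0 # map fst v)" if "v \<in> trim w F" for v
      using that trim_subset is_fork_sorted[OF F] by blast
  qed
  show "\<forall>v. is_leaf (trim w F) v \<longrightarrow> honest_vertex w v"
  proof (intro allI impI)
    fix v assume leaf: "is_leaf (trim w F) v"
    then obtain u where u: "u \<in> F" "honest_vertex w u" "prefix v u"
      by (auto simp: is_leaf_def trim_def)
    hence "\<not> strict_prefix v u"
      using leaf by (auto simp: is_leaf_def honest_in_trim)
    thus "honest_vertex w v" using u by (auto simp: strict_prefix_def)
  qed
qed

lemma is_fork_append_adversarial:
  assumes F: "is_fork w F" and t: "t \<in> F"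
    and sorted: "sorted_wrt (<) (map fst s)"
    and adv: "\<And>e. e \<in> set s \<Longrightarrow> adv_idx w (fst e) \<and> lab t < fst e"
  shows "is_fork w (F \<union> set (prefixes (t @ s)))"
proof (rule is_fork_same_honest[OF F])
  let ?G = "F \<union> set (prefixes (t @ s))"
  have "sorted_wrt (<) (0 # map fst (t @ s))"
    using sorted_labels_append[OF is_fork_sorted[OF F t] sorted] adv by blast
  thus "sorted_wrt (<) (0 # map fst v)" if "v \<in> ?G" for v
    using that is_fork_sorted[OF F] sorted_labels_prefix[of "t @ s" v] by auto
  show "fst e \<le> length w" if ve: "v \<in> ?G" "e \<in> set v" for v e
  proof -
    consider "v \<in> F" | "e \<in> set t" | "e \<in> set s"
      using ve set_mono_prefix[of v "t @ s"] by auto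
    thus ?thesis
      using ve is_fork_label_le[OF F] is_fork_label_le[OF F t] adv[of e]
      by cases (auto simp: adv_idx_def)
  qed
  show "v \<in> ?G \<longleftrightarrow> v \<in> F" if "v \<noteq> []" "honest_idx w (lab v)" for v
  proof -
    have "\<not> adv_idx w (lab v)" using that(2) by (simp add: adv_idx_def honest_idx_def)
    hence "last v \<notin> set s" using that(1) adv[of "last v"] by (auto simp: lab_def)
    thus ?thesis
      using prefix_append_last[of v t s] is_fork_prefix_closed[OF F t] by auto
  qed
  show "u \<in> ?G" if "v \<in> ?G" "prefix u v" for u v
    using that is_fork_prefix_closed[OF F] prefix_order.trans by auto
qed (use F in \<open>simp_all add: is_fork_finite is_fork_root\<close>)

lemma length_le_height: "finite F \<Longrightarrow> v \<in> F \<Longrightarrow> length v \<le> height F"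
  by (simp add: height_def)

lemma height_eqI:
  assumes "finite F" "v \<in> F" "length v = h" "\<And>u. u \<in> F \<Longrightarrow> length u \<le> h"
  shows "height F = h"
  unfolding height_def using assms by (intro Max_eqI) auto

lemma height_mono: "finite F \<Longrightarrow> G \<subseteq> F \<Longrightarrow> G \<noteq> {} \<Longrightarrow> height G \<le> height F"
  unfolding height_def by (intro Max_mono) auto

lemma length_le_length_word:
  assumes F: "is_fork w F" and v: "v \<in> F"
  shows "length v \<le> length w"
proof -
  have sorted: "sorted_wrt (<) (0 # map fst v)" using is_fork_sorted[OF F v] .
  have "distinct (map fst v)"
    using sorted by (simp add: strict_sorted_iff)
  hence "length v = card (set (map fst v))"
    using distinct_card by fastforce
  also have "\<dots> \<le> card {1..length w}"
    using sorted is_fork_label_le[OF F v] by (intro card_mono) fastforce+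
  finally show ?thesis by simp
qed

lemma height_le_length_word:
  assumes "is_fork w F"
  shows "height F \<le> length w"
  using is_fork_finite[OF assms] is_fork_root[OF assms] length_le_length_word[OF assms]
  unfolding height_def by (subst Max_le_iff) auto

lemma finite_adversarial_after: "finite {i. adv_idx w i \<and> k < i}"
  by (rule finite_subset[of _ "{1..length w}"]) (auto simp: adv_idx_def)

lemma reserve_le_length_word: "reserve w t \<le> length w"
proof -
  have "reserve w t \<le> card {1..length w}"
    unfolding reserve_def by (intro card_mono) (auto simp: adv_idx_def)
  thus ?thesis by simp
qed

lemma abs_reach_le_length_word: "is_fork w F \<Longrightarrow> \<bar>reach w F t\<bar> \<le> int (length w)"
  using reserve_le_length_word[of w t] height_le_length_word[of w F]
  unfolding reach_def gap_def by linarith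

lemma length_le_reserve:
  assumes "distinct (map fst s)" "fst ` set s \<subseteq> {i. adv_idx w i \<and> lab t < i}"
  shows "length s \<le> reserve w t"
  using card_mono[OF finite_adversarial_after assms(2)] distinct_card[OF assms(1)]
  by (simp add: reserve_def)

lemma adversarial_extension_exists:
  assumes "g \<le> reserve w t"
  shows "\<exists>s. length s = g \<and> sorted_wrt (<) (map fst s)
           \<and> (\<forall>e \<in> set s. adv_idx w (fst e) \<and> lab t < fst e \<and> snd e = T)"
proof -
  let ?A = "{i. adv_idx w i \<and> lab t < i}"
  define s where "s = map (\<lambda>i. (i, T)) (take g (sorted_list_of_set ?A))"
  have "length (sorted_list_of_set ?A) = reserve w t"
    by (simp add: reserve_def)
  moreover have "sorted_wrt (<) (take g (sorted_list_of_set ?A))"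
    by (intro sorted_wrt_take strict_sorted_list_of_set)
  moreover have "set (take g (sorted_list_of_set ?A)) \<subseteq> ?A"
    using set_take_subset set_sorted_list_of_set[OF finite_adversarial_after] by metis
  ultimately show ?thesis
    using assms by (intro exI[of _ s]) (auto simp: s_def comp_def)
qed

lemma last_honest_prefix:
  assumes "sorted_wrt (<) (0 # map fst t)" "\<And>e. e \<in> set t \<Longrightarrow> fst e \<le> length w"
  shows "\<exists>t'. prefix t' t \<and> honest_vertex w t'
           \<and> fst ` set (drop (length t') t) \<subseteq> {i. adv_idx w i \<and> lab t' < i}"
  using assms
proof (induction t rule: rev_induct)
  case Nil
  show ?case by (auto simp: honest_vertex_def)
next
  case (snoc e u)
  show ?case
  proof (cases "honest_vertex w (u @ [e])")
    case True
    thus ?thesis by auto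
  next
    case False
    have "sorted_wrt (<) (0 # map fst u)"
      using sorted_labels_prefix[OF snoc.prems(1), of u] by simp
    with snoc.IH snoc.prems(2) obtain t' where t': "prefix t' u" "honest_vertex w t'"
      "fst ` set (drop (length t') u) \<subseteq> {i. adv_idx w i \<and> lab t' < i}"
      by auto
    have "lab t' < fst e"
      using lab_less_lab_of_prefixes[OF snoc.prems(1), of t' "u @ [e]"] t'(1)
      by (auto dest: prefix_length_le intro: prefix_order.trans)
    moreover have "adv_idx w (fst e)"
      using False snoc.prems calculation by (auto simp: honest_vertex_def honest_idx_def adv_idx_def)
    ultimately show ?thesis
      using t' prefix_length_le[OF t'(1)] by (intro exI[of _ t']) auto
  qed
qed

lemma disjoint_over_prefixes:
  "disjoint_over m t1 t2 \<Longrightarrow> prefix s1 t1 \<Longrightarrow> prefix s2 t2 \<Longrightarrow> disjoint_over m s1 s2"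
  unfolding disjoint_over_def using prefix_order.trans by blast

lemma disjoint_over_append_fresh:
  assumes dj: "disjoint_over m t1 t2"
    and tags: "\<And>e. e \<in> set s1 \<Longrightarrow> snd e = T1" "\<And>e. e \<in> set s2 \<Longrightarrow> snd e = T2" "T1 \<noteq> T2"
    and fresh: "T1 \<notin> snd ` set t2" "T2 \<notin> snd ` set t1"
  shows "disjoint_over m (t1 @ s1) (t2 @ s2)"
  unfolding disjoint_over_def
proof
  assume "\<exists>p. p \<noteq> [] \<and> prefix p (t1 @ s1) \<and> prefix p (t2 @ s2) \<and> m < lab p"
  then obtain p where p: "p \<noteq> []" "prefix p (t1 @ s1)" "prefix p (t2 @ s2)" "m < lab p"
    by blast
  have "last p \<in> set t1" if "prefix p t1" using that p(1) set_mono_prefix by fastforce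
  moreover have "last p \<in> set t2" if "prefix p t2" using that p(1) set_mono_prefix by fastforce
  ultimately show False
    using prefix_append_last[OF p(2)] prefix_append_last[OF p(3)] dj p(1,4) tags fresh
    unfolding disjoint_over_def by (metis image_eqI)
qed

lemma balanced_fork_extension:
  assumes F: "is_fork w F" and t: "t1 \<in> F" "t2 \<in> F" and dj: "disjoint_over m t1 t2"
    and reach: "0 \<le> reach w F t1" "0 \<le> reach w F t2"
  shows "\<exists>F'. is_fork w F' \<and> (\<exists>e1 \<in> F'. \<exists>e2 \<in> F'. disjoint_over m e1 e2
           \<and> length e1 = height F' \<and> length e2 = height F')"
proof -
  define T where "T = Suc (Max (snd ` \<Union> (set ` F)))"
  have fresh: "snd e < T" if "v \<in> F" "e \<in> set v" for v e
    using that is_fork_finite[OF F] unfolding T_def by (intro le_imp_less_Suc Max_ge) auto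
  obtain s1 where s1: "length s1 = gap F t1" "sorted_wrt (<) (map fst s1)"
    "\<forall>e \<in> set s1. adv_idx w (fst e) \<and> lab t1 < fst e \<and> snd e = T"
    using adversarial_extension_exists[of "gap F t1" w t1 T] reach(1) unfolding reach_def by auto
  obtain s2 where s2: "length s2 = gap F t2" "sorted_wrt (<) (map fst s2)"
    "\<forall>e \<in> set s2. adv_idx w (fst e) \<and> lab t2 < fst e \<and> snd e = Suc T"
    using adversarial_extension_exists[of "gap F t2" w t2 "Suc T"] reach(2) unfolding reach_def by auto
  define F' where "F' = F \<union> set (prefixes (t1 @ s1)) \<union> set (prefixes (t2 @ s2))"
  have "is_fork w (F \<union> set (prefixes (t1 @ s1)))"
    using is_fork_append_adversarial[OF F t(1) s1(2)] s1(3) by blast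
  hence F': "is_fork w F'"
    unfolding F'_def using is_fork_append_adversarial[OF _ _ s2(2)] s2(3) t(2) by blast
  have len: "length (t1 @ s1) = height F" "length (t2 @ s2) = height F"
    using s1(1) s2(1) t length_le_height[OF is_fork_finite[OF F]] unfolding gap_def by auto
  have "height F' = height F"
    using F' len is_fork_finite[OF F] length_le_height[OF is_fork_finite[OF F]]
    by (intro height_eqI[of F' "t1 @ s1"])
      (auto simp: F'_def is_fork_finite dest: prefix_length_le)
  moreover have "disjoint_over m (t1 @ s1) (t2 @ s2)"
    using s1(3) s2(3) fresh t by (intro disjoint_over_append_fresh[OF dj, of s1 T s2 "Suc T"]) force+
  ultimately show ?thesis
    using F' len unfolding F'_def by fastforce
qed

lemma trim_prefix_reach_nonneg:
  assumes F: "is_fork w F" and t: "t \<in> F" "length t = height F"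
  shows "\<exists>s \<in> trim w F. prefix s t \<and> 0 \<le> reach w (trim w F) s"
proof -
  obtain s where s: "prefix s t" "honest_vertex w s"
    "fst ` set (drop (length s) t) \<subseteq> {i. adv_idx w i \<and> lab s < i}"
    using last_honest_prefix[OF is_fork_sorted[OF F t(1)] is_fork_label_le[OF F t(1)]] by blast
  have "distinct (map fst t)"
    using is_fork_sorted[OF F t(1)] by (simp add: strict_sorted_iff)
  hence "length t - length s \<le> reserve w s"
    using length_le_reserve[OF _ s(3)] by (simp add: drop_map[symmetric])
  moreover have "height (trim w F) \<le> height F"
    using trim_subset honest_in_trim[OF is_fork_root[OF F], of w]
    by (intro height_mono is_fork_finite[OF F]) (auto simp: honest_vertex_def)
  moreover have "s \<in> trim w F"
    using honest_in_trim is_fork_prefix_closed[OF F t(1) s(1)] s(2) by blast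
  ultimately show ?thesis
    using s(1) t(2) unfolding reach_def gap_def by auto
qed

lemma mu_fork_values_finite:
  assumes "is_fork (x @ y) F"
  shows "finite {min (reach (x @ y) F t1) (reach (x @ y) F t2) | t1 t2.
           t1 \<in> F \<and> t2 \<in> F \<and> disjoint_over (length x) t1 t2}"
  by (rule finite_subset[of _ "(\<lambda>(t1, t2). min (reach (x @ y) F t1) (reach (x @ y) F t2)) ` (F \<times> F)"])
    (auto simp: is_fork_finite[OF assms])

lemma mu_fork_ge:
  assumes "is_fork (x @ y) F" "t1 \<in> F" "t2 \<in> F" "disjoint_over (length x) t1 t2"
  shows "min (reach (x @ y) F t1) (reach (x @ y) F t2) \<le> mu_fork x y F"
  unfolding mu_fork_def by (rule Max_ge[OF mu_fork_values_finite[OF assms(1)]]) (use assms in blast)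

lemma mu_fork_attained:
  assumes "is_fork (x @ y) F"
  obtains t1 t2 where "t1 \<in> F" "t2 \<in> F" "disjoint_over (length x) t1 t2"
    "mu_fork x y F = min (reach (x @ y) F t1) (reach (x @ y) F t2)"
proof -
  have "disjoint_over (length x) [] []" by (simp add: disjoint_over_def)
  hence "mu_fork x y F \<in> {min (reach (x @ y) F t1) (reach (x @ y) F t2) | t1 t2.
           t1 \<in> F \<and> t2 \<in> F \<and> disjoint_over (length x) t1 t2}"
    unfolding mu_fork_def using is_fork_root[OF assms]
    by (intro Max_in[OF mu_fork_values_finite[OF assms]]) blast
  thus thesis using that by blast
qed

lemma abs_mu_fork_le_length_word:
  assumes "is_fork (x @ y) F"
  shows "\<bar>mu_fork x y F\<bar> \<le> int (length (x @ y))"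
proof -
  obtain t1 t2 where "mu_fork x y F = min (reach (x @ y) F t1) (reach (x @ y) F t2)"
    using mu_fork_attained[OF assms] by metis
  thus ?thesis
    using abs_reach_le_length_word[OF assms, of t1] abs_reach_le_length_word[OF assms, of t2]
    by linarith
qed

text \<open>Sibling tags make the set of closed forks infinite; only the bound on mu_fork makes
  the maximum in mu well defined.\<close>

lemma mu_values_finite: "finite {mu_fork x y F | F. closed_fork (x @ y) F}"
  by (rule finite_subset[of _ "{- int (length (x @ y)) .. int (length (x @ y))}"])
    (auto simp: closed_fork_def dest!: abs_mu_fork_le_length_word)

lemma mu_ge: "closed_fork (x @ y) F \<Longrightarrow> mu_fork x y F \<le> mu x y"
  unfolding mu_def by (rule Max_ge[OF mu_values_finite]) blast

lemma mu_attained: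
  obtains F where "closed_fork (x @ y) F" "mu x y = mu_fork x y F"
proof -
  obtain F0 where "is_fork (x @ y) F0" using fork_exists by blast
  hence "mu x y \<in> {mu_fork x y F | F. closed_fork (x @ y) F}"
    unfolding mu_def using closed_fork_trim by (intro Max_in[OF mu_values_finite]) blast
  thus thesis using that by blast
qed

lemma mu_nonneg_iff:
  "0 \<le> mu x y \<longleftrightarrow> (\<exists>F. closed_fork (x @ y) F \<and> (\<exists>t1 \<in> F. \<exists>t2 \<in> F.
     disjoint_over (length x) t1 t2 \<and> 0 \<le> reach (x @ y) F t1 \<and> 0 \<le> reach (x @ y) F t2))"
  (is "_ \<longleftrightarrow> ?good_pair")
proof
  assume "0 \<le> mu x y"
  obtain F where F: "closed_fork (x @ y) F" "mu x y = mu_fork x y F"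
    using mu_attained by blast
  then obtain t1 t2 where "t1 \<in> F" "t2 \<in> F" "disjoint_over (length x) t1 t2"
    "mu_fork x y F = min (reach (x @ y) F t1) (reach (x @ y) F t2)"
    using mu_fork_attained closed_fork_def by metis
  thus ?good_pair using F \<open>0 \<le> mu x y\<close> by auto
next
  assume ?good_pair
  then obtain F t1 t2 where "closed_fork (x @ y) F" "t1 \<in> F" "t2 \<in> F"
    "disjoint_over (length x) t1 t2" "0 \<le> min (reach (x @ y) F t1) (reach (x @ y) F t2)"
    by auto
  thus "0 \<le> mu x y"
    using mu_fork_ge mu_ge closed_fork_def by (meson order.trans)
qed

theorem fact1:
  fixes x y :: charstring
  shows "(\<exists>F. x_balanced x y F) \<longleftrightarrow> mu x y \<ge> 0"
proof
  assume "\<exists>F. x_balanced x y F"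
  then obtain F t1 t2 where F: "is_fork (x @ y) F" and t: "t1 \<in> F" "t2 \<in> F"
    and dj: "disjoint_over (length x) t1 t2" and len: "length t1 = height F" "length t2 = height F"
    unfolding x_balanced_def by blast
  obtain s1 s2 where "s1 \<in> trim (x @ y) F" "prefix s1 t1" "0 \<le> reach (x @ y) (trim (x @ y) F) s1"
    and "s2 \<in> trim (x @ y) F" "prefix s2 t2" "0 \<le> reach (x @ y) (trim (x @ y) F) s2"
    using trim_prefix_reach_nonneg[OF F t(1) len(1)] trim_prefix_reach_nonneg[OF F t(2) len(2)]
    by blast
  with disjoint_over_prefixes[OF dj] closed_fork_trim[OF F] show "mu x y \<ge> 0"
    unfolding mu_nonneg_iff by blast
next
  assume "mu x y \<ge> 0"
  then obtain F t1 t2 where "closed_fork (x @ y) F" "t1 \<in> F" "t2 \<in> F"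
    "disjoint_over (length x) t1 t2" "0 \<le> reach (x @ y) F t1" "0 \<le> reach (x @ y) F t2"
    unfolding mu_nonneg_iff by blast
  thus "\<exists>F. x_balanced x y F"
    unfolding x_balanced_def closed_fork_def by (metis balanced_fork_extension)
qed

end
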